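(* Let $A=(a_{ij})$ be a $3\times3$ Cartan matrix of infinite type whose principal submatrix $A_{12}$ is also of infinite type (i.e. $a_{12}a_{21}\ge 4$). Let $$\kappa=a_{12}\omega_1^2+a_{12}a_{21}\omega_1\omega_2+a_{21}\omega_2^2+a_{12}a_{31}\omega_1\omega_3+a_{21}a_{32}\omega_2\omega_3.$$ Then $\mathbb{Q}[\omega_1,\omega_2,\omega_3]^{\langle\sigma_1,\sigma_2\rangle}=\mathbb{Q}[\kappa,\omega_3]$.
   Context: A $3\times 3$ (generalized) Cartan matrix $A=(a_{ij})$ is an integer matrix with $a_{ii}=2$, $a_{ij}\le 0$ for $i\ne j$, $a_{ij}=0\iff a_{ji}=0$; infinite type means indecomposable and not of finite type. $\omega_1,\omega_2,\omega_3$ have degree 2 ($\mathbb{Q}[\omega_1,\omega_2,\omega_3]=H^*(BT;\mathbb{Q})$), $\alpha_j=\sum_i a_{ij}\omega_i$, and $\sigma_j(\omega_j)=\omega_j-\alpha_j$, $\sigma_j(\omega_i)=\omega_i$ for $i\ne j$. *)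

theory Defs
  imports "HOL-Computational_Algebra.Polynomial"
begin

text \<open>Q[w1,w2,w3] is represented as nested univariate polynomials rat poly poly poly:
  innermost variable w1, middle w2, outermost w3.\<close>

type_synonym mpoly3 = "rat poly poly poly"

definition cst3 :: "rat \<Rightarrow> mpoly3" where "cst3 c = [:[:[:c:]:]:]"

definition var3 :: "nat \<Rightarrow> mpoly3" where
  "var3 i = (if i = 1 then [:[:[:0,1:]:]:] else if i = 2 then [:[:0,1:]:] else [:0,1:])"

definition subst3 :: "mpoly3 \<Rightarrow> mpoly3 \<Rightarrow> mpoly3 \<Rightarrow> mpoly3 \<Rightarrow> mpoly3" where
  "subst3 p a b c =
     poly (map_poly (\<lambda>q. poly (map_poly (\<lambda>r. poly (map_poly cst3 r) a) q) b) p) c"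

definition cartan3 :: "(nat \<Rightarrow> nat \<Rightarrow> int) \<Rightarrow> bool" where
  "cartan3 A \<longleftrightarrow> (\<forall>i\<in>{1,2,3}. A i i = 2) \<and>
     (\<forall>i\<in>{1,2,3}. \<forall>j\<in>{1,2,3}. i \<noteq> j \<longrightarrow> A i j \<le> 0 \<and> (A i j = 0 \<longleftrightarrow> A j i = 0))"

definition indecomposable3 :: "(nat \<Rightarrow> nat \<Rightarrow> int) \<Rightarrow> bool" where
  "indecomposable3 A \<longleftrightarrow> \<not> (\<exists>I. I \<noteq> {} \<and> I \<subset> {1,2,3} \<and>
       (\<forall>i\<in>I. \<forall>j\<in>{1,2,3} - I. A i j = 0))"

definition det3 :: "(nat \<Rightarrow> nat \<Rightarrow> int) \<Rightarrow> int" where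
  "det3 A = A 1 1 * (A 2 2 * A 3 3 - A 2 3 * A 3 2)
          - A 1 2 * (A 2 1 * A 3 3 - A 2 3 * A 3 1)
          + A 1 3 * (A 2 1 * A 3 2 - A 2 2 * A 3 1)"

definition mulvec3 :: "(nat \<Rightarrow> nat \<Rightarrow> int) \<Rightarrow> (nat \<Rightarrow> real) \<Rightarrow> nat \<Rightarrow> real" where
  "mulvec3 A v i = (\<Sum>j\<in>{1,2,3}. of_int (A i j) * v j)"

text \<open>Kac's definition (Fin) of finite type for an indecomposable GCM.\<close>
definition finite_type3 :: "(nat \<Rightarrow> nat \<Rightarrow> int) \<Rightarrow> bool" where
  "finite_type3 A \<longleftrightarrow> indecomposable3 A \<and> det3 A \<noteq> 0 \<and>
     (\<exists>u. (\<forall>i\<in>{1,2,3}. u i > 0) \<and> (\<forall>i\<in>{1,2,3}. mulvec3 A u i > 0)) \<and>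
     (\<forall>v. (\<forall>i\<in>{1,2,3}. mulvec3 A v i \<ge> 0) \<longrightarrow>
          (\<forall>i\<in>{1,2,3}. v i > 0) \<or> (\<forall>i\<in>{1,2,3}. v i = 0))"

definition infinite_type3 :: "(nat \<Rightarrow> nat \<Rightarrow> int) \<Rightarrow> bool" where
  "infinite_type3 A \<longleftrightarrow> indecomposable3 A \<and> \<not> finite_type3 A"

definition alpha3 :: "(nat \<Rightarrow> nat \<Rightarrow> int) \<Rightarrow> nat \<Rightarrow> mpoly3" where
  "alpha3 A j = (\<Sum>i\<in>{1,2,3}. of_int (A i j) * var3 i)"

definition sigma3 :: "(nat \<Rightarrow> nat \<Rightarrow> int) \<Rightarrow> nat \<Rightarrow> mpoly3 \<Rightarrow> mpoly3" where
  "sigma3 A j f = subst3 f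
     (if j = 1 then var3 1 - alpha3 A 1 else var3 1)
     (if j = 2 then var3 2 - alpha3 A 2 else var3 2)
     (if j = 3 then var3 3 - alpha3 A 3 else var3 3)"

inductive_set gen12 :: "(nat \<Rightarrow> nat \<Rightarrow> int) \<Rightarrow> (mpoly3 \<Rightarrow> mpoly3) set" for A where
  gid: "id \<in> gen12 A"
| gstep: "g \<in> gen12 A \<Longrightarrow> j \<in> {1,2} \<Longrightarrow> sigma3 A j \<circ> g \<in> gen12 A"
| ginv: "g \<in> gen12 A \<Longrightarrow> j \<in> {1,2} \<Longrightarrow> inv (sigma3 A j) \<circ> g \<in> gen12 A"

definition invariants12 :: "(nat \<Rightarrow> nat \<Rightarrow> int) \<Rightarrow> mpoly3 set" where
  "invariants12 A = {f. \<forall>g\<in>gen12 A. g f = f}"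

definition subalg2 :: "mpoly3 \<Rightarrow> mpoly3 \<Rightarrow> mpoly3 set" where
  "subalg2 k z = {poly (map_poly (\<lambda>r. poly (map_poly cst3 r) k) q) z | q :: rat poly poly. True}"

definition kappa3 :: "(nat \<Rightarrow> nat \<Rightarrow> int) \<Rightarrow> mpoly3" where
  "kappa3 A = of_int (A 1 2) * var3 1 ^ 2 + of_int (A 1 2 * A 2 1) * var3 1 * var3 2
     + of_int (A 2 1) * var3 2 ^ 2 + of_int (A 1 2 * A 3 1) * var3 1 * var3 3
     + of_int (A 2 1 * A 3 2) * var3 2 * var3 3"

end

theory Submission
  imports Defs
begin

text \<open>Write S = Q[kappa, w3]. Since a12 \<noteq> 0, kappa / a12 is monic of degree 2 in w1, so every
  polynomial has the form P(w2) + w1 * Q(w2) with P, Q polynomials over S. Both reflections fix S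
  pointwise, and sigma1 fixes w2 but sends w1 to w1 - alpha1 with alpha1 \<noteq> 0; hence an invariant
  is P(w2) for one such P. For every g in the group, P(g w2) = g (P(w2)) = P(w2), so P - P(w2)
  vanishes on the orbit of w2. When a12 a21 \<ge> 4 the w2-coefficient of (sigma1 sigma2)^n w2 grows
  strictly with n, the orbit is infinite, and therefore P is the constant P(w2) \<in> S.\<close>

locale comm_ring_hom =
  fixes h :: "'a::comm_ring_1 \<Rightarrow> 'b::comm_ring_1"
  assumes hom_add: "h (x + y) = h x + h y"
    and hom_mult: "h (x * y) = h x * h y"
    and hom_one [simp]: "h 1 = 1"
begin

lemma hom_zero [simp]: "h 0 = 0"
  using hom_add[of 0 0] by simp

lemma hom_uminus: "h (- x) = - h x"
  using hom_add[of x "- x"] by (simp add: eq_neg_iff_add_eq_0 add.commute)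

lemma hom_diff: "h (x - y) = h x - h y"
  using hom_add[of x "- y"] by (simp add: hom_uminus)

lemma hom_of_nat: "h (of_nat n) = of_nat n"
  by (induction n) (simp_all add: hom_add)

lemma hom_of_int: "h (of_int k) = of_int k"
  by (cases k rule: int_cases) (simp_all add: hom_uminus hom_of_nat del: of_nat_Suc)

lemma hom_power: "h (x ^ n) = h x ^ n"
  by (induction n) (simp_all add: hom_mult)

lemma hom_poly_map_poly:
  assumes "F 0 = 0"
  shows "h (poly (map_poly F p) z) = poly (map_poly (h \<circ> F) p) (h z)"
  by (induction p) (simp_all add: assms map_poly_pCons hom_add hom_mult)

end

lemma comm_ring_hom_id: "comm_ring_hom id"
  by unfold_locales simp_all

lemma comm_ring_hom_comp: "comm_ring_hom f \<Longrightarrow> comm_ring_hom g \<Longrightarrow> comm_ring_hom (f \<circ> g)"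
  by (simp add: comm_ring_hom_def)

lemma comm_ring_hom_poly_eval:
  assumes "comm_ring_hom F"
  shows "comm_ring_hom (\<lambda>p. poly (map_poly F p) c)"
proof -
  interpret F: comm_ring_hom F by fact
  have map_add: "map_poly F (p + q) = map_poly F p + map_poly F q" for p q
    by (intro poly_eqI) (simp add: coeff_map_poly F.hom_add)
  have "poly (map_poly F (p * q)) c = poly (map_poly F p) c * poly (map_poly F q) c" for p q
    by (induction p)
      (simp_all add: map_add map_poly_pCons map_poly_smult F.hom_mult algebra_simps)
  then show ?thesis
    by unfold_locales (simp_all add: map_add)
qed

lemma poly_map_poly_mem_subring:
  assumes "0 \<in> T" "\<And>x y. x \<in> T \<Longrightarrow> y \<in> T \<Longrightarrow> x + y \<in> T"
    "\<And>x y. x \<in> T \<Longrightarrow> y \<in> T \<Longrightarrow> x * y \<in> T"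
    "F 0 = 0" "\<And>c. F c \<in> T" "z \<in> T"
  shows "poly (map_poly F p) z \<in> T"
  by (induction p) (simp_all add: assms map_poly_pCons)

lemma comm_ring_hom_cst3: "comm_ring_hom cst3"
  by unfold_locales (simp_all add: cst3_def one_pCons)

interpretation cst3: comm_ring_hom cst3
  by (rule comm_ring_hom_cst3)

definition subalg2_eval :: "mpoly3 \<Rightarrow> mpoly3 \<Rightarrow> rat poly poly \<Rightarrow> mpoly3" where
  "subalg2_eval k z q = poly (map_poly (\<lambda>r. poly (map_poly cst3 r) k) q) z"

lemma subalg2_eq_range: "subalg2 k z = range (subalg2_eval k z)"
  by (auto simp: subalg2_def subalg2_eval_def)

lemma comm_ring_hom_subalg2_eval: "comm_ring_hom (subalg2_eval k z)"
  unfolding subalg2_eval_def[abs_def] by (intro comm_ring_hom_poly_eval comm_ring_hom_cst3)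

interpretation subalg2_eval: comm_ring_hom "subalg2_eval k z" for k z
  by (rule comm_ring_hom_subalg2_eval)

lemma subalg2_eval_monomials [simp]:
  "subalg2_eval k z [:[:c:]:] = cst3 c" "subalg2_eval k z [:[:0, c:]:] = cst3 c * k"
  "subalg2_eval k z [:0, [:c:]:] = cst3 c * z" "subalg2_eval k z [:0, 1:] = z"
  by (simp_all add: subalg2_eval_def map_poly_pCons cst3_def one_pCons[symmetric])

lemma comm_ring_hom_subalg2_eval_commute:
  assumes "comm_ring_hom h" "\<And>c. h (cst3 c) = cst3 c"
  shows "h (subalg2_eval k z q) = subalg2_eval (h k) (h z) q"
proof -
  interpret h: comm_ring_hom h by fact
  have "h \<circ> cst3 = cst3" using assms(2) by auto
  then show ?thesis
    by (simp add: subalg2_eval_def h.hom_poly_map_poly map_poly_map_poly comp_def)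
qed

lemma subst3_eq_subalg2_eval: "subst3 p a b c = poly (map_poly (subalg2_eval a b) p) c"
  by (simp add: subst3_def subalg2_eval_def[abs_def])

lemma comm_ring_hom_subst3: "comm_ring_hom (\<lambda>p. subst3 p a b c)"
  unfolding subst3_def by (intro comm_ring_hom_poly_eval comm_ring_hom_cst3)

interpretation subst3: comm_ring_hom "\<lambda>p. subst3 p a b c" for a b c
  by (rule comm_ring_hom_subst3)

lemma subst3_cst3 [simp]: "subst3 (cst3 c) a b d = cst3 c"
  by (simp add: subst3_def cst3_def map_poly_pCons)

text \<open>The first equation is stated for Suc 0, the simp normal form of the index 1.\<close>

lemma subst3_var3 [simp]:
  "subst3 (var3 (Suc 0)) a b c = a" "subst3 (var3 2) a b c = b" "subst3 (var3 3) a b c = c"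
  by (simp_all add: subst3_def cst3_def var3_def map_poly_pCons one_pCons[symmetric])

lemma subst3_vars: "subst3 p (var3 1) (var3 2) (var3 3) = p"
proof -
  have inner: "poly (map_poly cst3 r) (var3 1) = [:[:r:]:]" for r
    by (induction r) (simp_all add: map_poly_pCons cst3_def var3_def)
  have middle: "poly (map_poly (\<lambda>r. [:[:r:]:]) q) (var3 2) = [:q:]" for q
    by (induction q) (simp_all add: map_poly_pCons var3_def)
  have outer: "poly (map_poly (\<lambda>q. [:q:]) p) (var3 3) = p" for p :: mpoly3
    by (induction p) (simp_all add: map_poly_pCons var3_def)
  show ?thesis unfolding subst3_def inner middle outer ..
qed

lemma comm_ring_hom_subst3_commute:
  assumes "comm_ring_hom h" "\<And>c. h (cst3 c) = cst3 c"
  shows "h (subst3 p a b c) = subst3 p (h a) (h b) (h c)"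
proof -
  interpret h: comm_ring_hom h by fact
  have "h \<circ> subalg2_eval a b = subalg2_eval (h a) (h b)"
    using comm_ring_hom_subalg2_eval_commute[OF assms] by auto
  then show ?thesis by (simp add: subst3_eq_subalg2_eval h.hom_poly_map_poly)
qed

lemma mem_subring_containing_vars:
  assumes "0 \<in> T" "\<And>x y. x \<in> T \<Longrightarrow> y \<in> T \<Longrightarrow> x + y \<in> T"
    "\<And>x y. x \<in> T \<Longrightarrow> y \<in> T \<Longrightarrow> x * y \<in> T"
    "\<And>c. cst3 c \<in> T" "var3 1 \<in> T" "var3 2 \<in> T" "var3 3 \<in> T"
  shows "p \<in> T"
proof -
  note closed = assms(1-3)
  have inner: "poly (map_poly cst3 r) (var3 1) \<in> T" for r
    by (rule poly_map_poly_mem_subring[OF closed]) (use assms(4,5) in simp_all)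
  have middle: "poly (map_poly (\<lambda>r. poly (map_poly cst3 r) (var3 1)) q) (var3 2) \<in> T" for q
    by (rule poly_map_poly_mem_subring[OF closed]) (use inner assms(6) in simp_all)
  have "subst3 p (var3 1) (var3 2) (var3 3) \<in> T"
    unfolding subst3_def
    by (rule poly_map_poly_mem_subring[OF closed]) (use middle assms(7) in simp_all)
  then show ?thesis by (simp only: subst3_vars)
qed

section \<open>The reflections sigma1 and sigma2\<close>

interpretation sigma3: comm_ring_hom "sigma3 A j" for A j
  unfolding sigma3_def[abs_def] by (rule comm_ring_hom_subst3)

lemma sigma3_cst3 [simp]: "sigma3 A j (cst3 c) = cst3 c"
  by (simp add: sigma3_def)

lemma sigma3_var3 [simp]:
  assumes "i \<in> {1, 2, 3}"
  shows "sigma3 A j (var3 i) = (if j = i then var3 i - alpha3 A i else var3 i)"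
  using assms by (auto simp: sigma3_def)

lemma alpha3_expand:
  "alpha3 A j = of_int (A 1 j) * var3 1 + of_int (A 2 j) * var3 2 + of_int (A 3 j) * var3 3"
  by (simp add: alpha3_def)

lemma sigma3_sigma3:
  assumes "j \<in> {1, 2, 3}" "A j j = 2"
  shows "sigma3 A j (sigma3 A j p) = p"
proof -
  have "sigma3 A j (sigma3 A j p) = subst3 p (var3 1) (var3 2) (var3 3)"
    using assms unfolding sigma3_def[of A j p]
    by (auto simp: comm_ring_hom_subst3_commute[OF sigma3.comm_ring_hom_axioms] alpha3_expand
        sigma3.hom_diff sigma3.hom_add sigma3.hom_mult sigma3.hom_of_int)
  then show ?thesis by (simp only: subst3_vars)
qed

lemma inv_sigma3:
  assumes "j \<in> {1, 2, 3}" "A j j = 2"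
  shows "inv (sigma3 A j) = sigma3 A j"
  using sigma3_sigma3[of j A, OF assms] by (intro inv_unique_comp) (auto simp: fun_eq_iff)

lemmas sigma3_hom_simps =
  sigma3.hom_add sigma3.hom_mult sigma3.hom_diff sigma3.hom_power sigma3.hom_of_int

lemma sigma3_kappa3:
  assumes "j \<in> {1, 2}" "A j j = 2"
  shows "sigma3 A j (kappa3 A) = kappa3 A"
  using assms unfolding kappa3_def
  by (auto simp: sigma3_hom_simps alpha3_expand algebra_simps power2_eq_square)

lemma sigma3_fixes_subalg2:
  assumes "j \<in> {1, 2}" "A j j = 2" "s \<in> subalg2 (kappa3 A) (var3 3)"
  shows "sigma3 A j s = s"
  using assms comm_ring_hom_subalg2_eval_commute[OF sigma3.comm_ring_hom_axioms sigma3_cst3]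
  by (auto simp: subalg2_eq_range sigma3_kappa3)

lemma alpha3_nonzero:
  assumes "A 1 1 \<noteq> 0"
  shows "alpha3 A 1 \<noteq> 0"
proof
  assume "alpha3 A 1 = 0"
  then have "subst3 (alpha3 A 1) 1 0 0 = 0" by simp
  with assms show False
    by (simp add: alpha3_expand subst3.hom_add subst3.hom_mult subst3.hom_of_int)
qed

lemma sigma3_in_gen12: "j \<in> {1, 2} \<Longrightarrow> sigma3 A j \<in> gen12 A"
  using gen12.gstep[OF gen12.gid] by (metis comp_id)

lemma gen12_induct_sigma3 [consumes 3, case_names id sigma3]:
  assumes "g \<in> gen12 A" "A 1 1 = 2" "A 2 2 = 2"
    and "P id" "\<And>g j. P g \<Longrightarrow> j \<in> {1, 2} \<Longrightarrow> P (sigma3 A j \<circ> g)"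
  shows "P g"
  using assms(1)
proof induction
  case (ginv g j)
  then have "inv (sigma3 A j) = sigma3 A j" using assms(2,3) by (intro inv_sigma3) auto
  with ginv assms(5) show ?case by metis
qed (use assms(4,5) in blast)+

lemma gen12_comm_ring_hom:
  assumes "g \<in> gen12 A" "A 1 1 = 2" "A 2 2 = 2"
  shows "comm_ring_hom g"
  using assms
  by (induction rule: gen12_induct_sigma3)
    (rule comm_ring_hom_id, rule comm_ring_hom_comp[OF sigma3.comm_ring_hom_axioms])

lemma gen12_fixes_subalg2:
  assumes "g \<in> gen12 A" "A 1 1 = 2" "A 2 2 = 2" "s \<in> subalg2 (kappa3 A) (var3 3)"
  shows "g s = s"
  using assms(1-3)
proof (induction rule: gen12_induct_sigma3)
  case (sigma3 g j)
  with assms(2-4) show ?case by (auto simp: sigma3_fixes_subalg2)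
qed simp

section \<open>Invariants as polynomials in w2 over Q[kappa, w3]\<close>

text \<open>Here P is a polynomial in one variable whose coefficients are elements of Q[k, z], each
  encoded by a preimage under \<^const>\<open>subalg2_eval\<close>; that its type coincides with
  \<^typ>\<open>mpoly3\<close> is an accident.\<close>

definition subalg2_poly_var2 :: "mpoly3 \<Rightarrow> mpoly3 \<Rightarrow> rat poly poly poly \<Rightarrow> mpoly3" where
  "subalg2_poly_var2 k z P = poly (map_poly (subalg2_eval k z) P) (var3 2)"

lemma comm_ring_hom_subalg2_poly_var2: "comm_ring_hom (subalg2_poly_var2 k z)"
  unfolding subalg2_poly_var2_def[abs_def]
  by (intro comm_ring_hom_poly_eval comm_ring_hom_subalg2_eval)

interpretation subalg2_poly_var2: comm_ring_hom "subalg2_poly_var2 k z" for k z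
  by (rule comm_ring_hom_subalg2_poly_var2)

lemma subalg2_poly_var2_pCons [simp]:
  "subalg2_poly_var2 k z (pCons a P) = subalg2_eval k z a + var3 2 * subalg2_poly_var2 k z P"
  by (simp add: subalg2_poly_var2_def map_poly_pCons)

lemma var1_square_over_subalg2:
  assumes "A 1 2 \<noteq> 0"
  shows "\<exists>C D. var3 1 * var3 1 =
    subalg2_poly_var2 (kappa3 A) (var3 3) C + var3 1 * subalg2_poly_var2 (kappa3 A) (var3 3) D"
proof -
  define u :: rat where "u = 1 / of_int (A 1 2)"
  have u: "cst3 u * of_int (A 1 2) = 1"
    using assms by (simp add: u_def flip: cst3.hom_of_int cst3.hom_mult)
  define X where
    "X = var3 1 * var3 1 + of_int (A 2 1) * var3 1 * var3 2 + of_int (A 3 1) * var3 1 * var3 3"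
  define Y where "Y = var3 2 * var3 2 + of_int (A 3 2) * var3 2 * var3 3"
  have "cst3 u * kappa3 A = (cst3 u * of_int (A 1 2)) * X + cst3 u * of_int (A 2 1) * Y"
    by (simp add: kappa3_def X_def Y_def algebra_simps power2_eq_square)
  then have u_kappa: "cst3 u * kappa3 A = X + cst3 u * of_int (A 2 1) * Y"
    by (simp only: u mult_1_left)
  define C :: "rat poly poly poly" where
    "C = [: [:[:0, u:]:], [:0, [:- u * of_int (A 2 1 * A 3 2):]:], [:[:- u * of_int (A 2 1):]:] :]"
  define D :: "rat poly poly poly" where
    "D = [: [:0, [:- of_int (A 3 1):]:], [:[:- of_int (A 2 1):]:] :]"
  have "var3 1 * var3 1 =
      subalg2_poly_var2 (kappa3 A) (var3 3) C + var3 1 * subalg2_poly_var2 (kappa3 A) (var3 3) D"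
    unfolding C_def D_def
    by (simp add: cst3.hom_mult cst3.hom_uminus cst3.hom_of_int u_kappa)
      (simp add: X_def Y_def algebra_simps)
  then show ?thesis by blast
qed

lemma mpoly3_decomposition_over_subalg2:
  assumes square: "var3 1 * var3 1 =
    subalg2_poly_var2 k (var3 3) C + var3 1 * subalg2_poly_var2 k (var3 3) D"
  shows "\<exists>P Q. f = subalg2_poly_var2 k (var3 3) P + var3 1 * subalg2_poly_var2 k (var3 3) Q"
proof -
  let ?\<Phi> = "subalg2_poly_var2 k (var3 3)"
  define T where "T = {?\<Phi> P + var3 1 * ?\<Phi> Q | P Q. True}"
  have mem_T: "?\<Phi> P + var3 1 * ?\<Phi> Q \<in> T" for P Q
    unfolding T_def by blast
  have "f \<in> T"
  proof (rule mem_subring_containing_vars)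
    show "0 \<in> T" using mem_T[of 0 0] by simp
    show "cst3 c \<in> T" for c using mem_T[of "[:[:[:c:]:]:]" 0] by simp
    show "var3 1 \<in> T" using mem_T[of 0 1] by simp
    show "var3 2 \<in> T" using mem_T[of "[:0, 1:]" 0] by simp
    show "var3 3 \<in> T" using mem_T[of "[:[:0, 1:]:]" 0] by simp
    show "x + y \<in> T" if "x \<in> T" "y \<in> T" for x y
      using that mem_T[of "_ + _" "_ + _"]
      by (auto simp: T_def subalg2_poly_var2.hom_add algebra_simps)
    show "x * y \<in> T" if xy: "x \<in> T" "y \<in> T" for x y
    proof -
      obtain P Q P' Q'
        where x: "x = ?\<Phi> P + var3 1 * ?\<Phi> Q" and y: "y = ?\<Phi> P' + var3 1 * ?\<Phi> Q'"
        using xy by (auto simp: T_def)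
      have "x * y = ?\<Phi> P * ?\<Phi> P' + var3 1 * (?\<Phi> P * ?\<Phi> Q' + ?\<Phi> Q * ?\<Phi> P')
          + (var3 1 * var3 1) * (?\<Phi> Q * ?\<Phi> Q')"
        unfolding x y by (simp add: algebra_simps)
      also have "\<dots> =
          ?\<Phi> (P * P' + C * (Q * Q')) + var3 1 * ?\<Phi> (P * Q' + Q * P' + D * (Q * Q'))"
        unfolding square subalg2_poly_var2.hom_add subalg2_poly_var2.hom_mult
        by (simp add: algebra_simps)
      finally show ?thesis using mem_T by simp
    qed
  qed
  then show ?thesis unfolding T_def by blast
qed

lemma comm_ring_hom_subalg2_poly_var2_commute:
  assumes "comm_ring_hom g" "\<And>q. g (subalg2_eval k z q) = subalg2_eval k z q"
  shows "g (subalg2_poly_var2 k z P) = poly (map_poly (subalg2_eval k z) P) (g (var3 2))"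
proof -
  interpret g: comm_ring_hom g by fact
  have "g \<circ> subalg2_eval k z = subalg2_eval k z" using assms(2) by auto
  then show ?thesis by (simp add: subalg2_poly_var2_def g.hom_poly_map_poly)
qed

lemma invariant_eq_subalg2_poly_var2:
  assumes "f \<in> invariants12 A" "A 1 1 = 2" "A 2 2 = 2" "A 1 2 \<noteq> 0"
  shows "\<exists>P. f = subalg2_poly_var2 (kappa3 A) (var3 3) P"
proof -
  let ?\<Phi> = "subalg2_poly_var2 (kappa3 A) (var3 3)"
  obtain C D where "var3 1 * var3 1 = ?\<Phi> C + var3 1 * ?\<Phi> D"
    using var1_square_over_subalg2[of A, OF assms(4)] by blast
  then obtain P Q where f: "f = ?\<Phi> P + var3 1 * ?\<Phi> Q"
    using mpoly3_decomposition_over_subalg2 by blast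
  have sigma1_fixes: "sigma3 A 1 (?\<Phi> R) = ?\<Phi> R" for R
    using comm_ring_hom_subalg2_poly_var2_commute[OF sigma3.comm_ring_hom_axioms,
        of A 1 "kappa3 A" "var3 3" R] sigma3_fixes_subalg2[of 1 A] assms(2)
    by (simp add: subalg2_eq_range subalg2_poly_var2_def)
  have "f = sigma3 A 1 f"
    using assms(1) sigma3_in_gen12[of 1 A] unfolding invariants12_def by force
  also have "\<dots> = ?\<Phi> P + (var3 1 - alpha3 A 1) * ?\<Phi> Q"
    unfolding f sigma3.hom_add sigma3.hom_mult sigma1_fixes by simp
  finally have "alpha3 A 1 * ?\<Phi> Q = 0"
    using f by (simp add: algebra_simps)
  with alpha3_nonzero[of A] assms(2) have "?\<Phi> Q = 0" by simp
  with f show ?thesis by auto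
qed

section \<open>The orbit of w2\<close>

definition lin3 :: "rat \<times> rat \<times> rat \<Rightarrow> mpoly3" where
  "lin3 = (\<lambda>(c1, c2, c3). cst3 c1 * var3 1 + cst3 c2 * var3 2 + cst3 c3 * var3 3)"

fun coxeter_step :: "(nat \<Rightarrow> nat \<Rightarrow> int) \<Rightarrow> rat \<times> rat \<times> rat \<Rightarrow> rat \<times> rat \<times> rat" where
  "coxeter_step A (c1, c2, c3) =
    (of_int (A 1 2) * c2 - c1,
     of_int (A 1 2 * A 2 1 - 1) * c2 - of_int (A 2 1) * c1,
     c3 - of_int (A 3 2) * c2 - of_int (A 3 1) * (c1 - of_int (A 1 2) * c2))"

lemma sigma3_sigma3_lin3:
  assumes "A 1 1 = 2" "A 2 2 = 2"
  shows "sigma3 A 1 (sigma3 A 2 (lin3 c)) = lin3 (coxeter_step A c)"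
  using assms
  by (cases c) (simp add: lin3_def sigma3_hom_simps alpha3_expand cst3.hom_add cst3.hom_diff
      cst3.hom_mult cst3.hom_of_int algebra_simps)

definition var2_coeff_increment :: "(nat \<Rightarrow> nat \<Rightarrow> int) \<Rightarrow> rat \<times> rat \<times> rat \<Rightarrow> rat" where
  "var2_coeff_increment A c = of_int (A 1 2 * A 2 1 - 2) * fst (snd c) - of_int (A 2 1) * fst c"

lemma coxeter_step_var2_coeff:
  "fst (snd (coxeter_step A c)) = fst (snd c) + var2_coeff_increment A c"
  by (cases c) (simp add: var2_coeff_increment_def algebra_simps)

lemma var2_coeff_increment_coxeter_step:
  "var2_coeff_increment A (coxeter_step A c) =
    var2_coeff_increment A c + of_int (A 1 2 * A 2 1 - 4) * fst (snd (coxeter_step A c))"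
  by (cases c) (simp add: var2_coeff_increment_def algebra_simps)

lemma coxeter_step_growth:
  assumes "A 1 2 * A 2 1 \<ge> 4" "1 \<le> fst (snd c)" "2 \<le> var2_coeff_increment A c"
  shows "1 \<le> fst (snd (coxeter_step A c))" "2 \<le> var2_coeff_increment A (coxeter_step A c)"
proof -
  show c2: "1 \<le> fst (snd (coxeter_step A c))"
    using assms(2,3) by (simp add: coxeter_step_var2_coeff)
  have "(0 :: rat) \<le> of_int (A 1 2 * A 2 1 - 4)"
    unfolding of_int_0_le_iff using assms(1) by simp
  with c2 have "0 \<le> of_int (A 1 2 * A 2 1 - 4) * fst (snd (coxeter_step A c))"
    by simp
  with assms(3) show "2 \<le> var2_coeff_increment A (coxeter_step A c)"
    unfolding var2_coeff_increment_coxeter_step by linarith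
qed

lemma strict_mono_coxeter_var2_coeff:
  assumes "A 1 2 * A 2 1 \<ge> 4"
  shows "strict_mono (\<lambda>n. fst (snd ((coxeter_step A ^^ n) (0, 1, 0))))"
proof -
  let ?c = "\<lambda>n. (coxeter_step A ^^ n) (0, 1, 0)"
  have growth: "1 \<le> fst (snd (?c n)) \<and> 2 \<le> var2_coeff_increment A (?c n)" for n
  proof (induction n)
    case 0
    have "(2 :: rat) \<le> of_int (A 1 2 * A 2 1 - 2)"
      using assms by linarith
    then show ?case by (simp add: var2_coeff_increment_def)
  next
    case (Suc n)
    then show ?case using coxeter_step_growth[OF assms] by simp
  qed
  have "0 < var2_coeff_increment A (?c n)" for n
    using growth[of n] by linarith
  then show ?thesis
    unfolding strict_mono_Suc_iff by (simp add: coxeter_step_var2_coeff)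
qed

lemma funpow_coxeter_in_gen12: "(sigma3 A 1 \<circ> sigma3 A 2) ^^ n \<in> gen12 A"
proof (induction n)
  case (Suc n)
  then have "sigma3 A 1 \<circ> (sigma3 A 2 \<circ> (sigma3 A 1 \<circ> sigma3 A 2) ^^ n) \<in> gen12 A"
    by (intro gen12.gstep Suc.IH) simp_all
  then show ?case by (simp only: funpow.simps(2) comp_assoc)
qed (simp only: funpow.simps(1) gen12.gid)

lemma funpow_coxeter_var2:
  assumes "A 1 1 = 2" "A 2 2 = 2"
  shows "((sigma3 A 1 \<circ> sigma3 A 2) ^^ n) (var3 2) = lin3 ((coxeter_step A ^^ n) (0, 1, 0))"
proof (induction n)
  case 0
  then show ?case by (simp add: lin3_def)
next
  case (Suc n)
  then show ?case using sigma3_sigma3_lin3[of A, OF assms] by simp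
qed

lemma infinite_gen12_orbit_var2:
  assumes "A 1 1 = 2" "A 2 2 = 2" "A 1 2 * A 2 1 \<ge> 4"
  shows "infinite ((\<lambda>g. g (var3 2)) ` gen12 A)"
proof
  let ?orbit = "\<lambda>n. ((sigma3 A 1 \<circ> sigma3 A 2) ^^ n) (var3 2)"
  have var2_coeff: "subst3 (lin3 c) 0 1 0 = cst3 (fst (snd c))" for c
    by (cases c) (simp add: lin3_def subst3.hom_add subst3.hom_mult)
  have "inj ?orbit"
  proof (rule injI)
    fix m n assume "?orbit m = ?orbit n"
    then have "cst3 (fst (snd ((coxeter_step A ^^ m) (0, 1, 0)))) =
        cst3 (fst (snd ((coxeter_step A ^^ n) (0, 1, 0))))"
      unfolding funpow_coxeter_var2[of A, OF assms(1,2)] var2_coeff[symmetric] by simp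
    then show "m = n"
      using strict_mono_eq[OF strict_mono_coxeter_var2_coeff[OF assms(3)]] by (simp add: cst3_def)
  qed
  moreover assume "finite ((\<lambda>g. g (var3 2)) ` gen12 A)"
  then have "finite (range ?orbit)"
    by (rule finite_subset[rotated]) (use funpow_coxeter_in_gen12[where A = A] in blast)
  ultimately show False
    using finite_imageD by blast
qed

lemma invariants12_subset_subalg2:
  assumes "A 1 1 = 2" "A 2 2 = 2" "A 1 2 * A 2 1 \<ge> 4"
  shows "invariants12 A \<subseteq> subalg2 (kappa3 A) (var3 3)"
proof
  fix f assume f: "f \<in> invariants12 A"
  let ?E = "subalg2_eval (kappa3 A) (var3 3)"
  have "A 1 2 \<noteq> 0" using assms(3) by auto
  then obtain P where P: "f = subalg2_poly_var2 (kappa3 A) (var3 3) P"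
    using invariant_eq_subalg2_poly_var2[OF f assms(1,2)] by blast
  define R where "R = map_poly ?E P - [:f:]"
  have "(\<lambda>g. g (var3 2)) ` gen12 A \<subseteq> {x. poly R x = 0}"
  proof clarify
    fix g assume g: "g \<in> gen12 A"
    have "g f = poly (map_poly ?E P) (g (var3 2))"
      unfolding P
      using comm_ring_hom_subalg2_poly_var2_commute[OF gen12_comm_ring_hom[OF g assms(1,2)]]
        gen12_fixes_subalg2[OF g assms(1,2)] by (simp add: subalg2_eq_range)
    moreover have "g f = f" using f g by (simp add: invariants12_def)
    ultimately show "poly R (g (var3 2)) = 0"
      by (simp add: R_def)
  qed
  with infinite_gen12_orbit_var2[OF assms] have "R = 0"
    using poly_roots_finite finite_subset by blast
  then have "f = coeff (map_poly ?E P) 0"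
    by (simp add: R_def)
  also have "\<dots> = ?E (coeff P 0)"
    by (simp add: coeff_map_poly)
  finally show "f \<in> subalg2 (kappa3 A) (var3 3)"
    by (simp add: subalg2_eq_range)
qed

theorem lemma7p3:
  fixes A :: "nat \<Rightarrow> nat \<Rightarrow> int"
  assumes "cartan3 A" and "infinite_type3 A" and "A 1 2 * A 2 1 \<ge> 4"
  shows "invariants12 A = subalg2 (kappa3 A) (var3 3)"
proof
  have "A 1 1 = 2" "A 2 2 = 2"
    using assms(1) unfolding cartan3_def by auto
  then show "invariants12 A \<subseteq> subalg2 (kappa3 A) (var3 3)"
    "subalg2 (kappa3 A) (var3 3) \<subseteq> invariants12 A"
    using invariants12_subset_subalg2[OF _ _ assms(3)] gen12_fixes_subalg2
    by (auto simp: invariants12_def)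
qed

end
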